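(* Let $\theta\in(0,1)$ be irrational, $\tau=1$, $k\ge1$ even, and $b\ge1$ an integer with $\frac1{(b+1)(b+2)}\le q_k\|q_k\theta\|<\frac1{b(b+1)}$. Then $$\bigcup_{i=1}^{q_k}\Big(i\theta-\frac1{q_{k+1}},\;i\theta+(b-1)\|q_k\theta\|+\frac1{(b+1)q_k}\Big)\subset F_k.$$
   Context: $\mathbb T=\mathbb R/\mathbb Z$, points identified with fractional parts; $(x-a,x+b)$ denotes the projection to $\mathbb T$ of the real interval. $\|t\|$ is the distance to the nearest integer; $B(x,r)$ the open ball in $\mathbb T$. $q_k$ are the convergent denominators of $\theta=[0;a_1,a_2,\dots]$ ($q_0=1$, $q_{k+1}=a_{k+1}q_k+q_{k-1}$). With $\tau=1$: $G_n=\bigcup_{i=1}^nB(i\theta,n^{-1})$ and $F_k=\bigcap_{n=q_k+1}^{q_{k+1}}G_n$. *)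

theory Defs
  imports Complex_Main
begin

text \<open>Subsets of the circle T = R/Z are represented as Z-periodic subsets of R.\<close>

definition tnorm :: "real \<Rightarrow> real" where
  "tnorm t = \<bar>t - of_int (round t)\<bar>"

fun cf_rem :: "real \<Rightarrow> nat \<Rightarrow> real" where
  "cf_rem \<theta> 0 = \<theta>"
| "cf_rem \<theta> (Suc n) = frac (1 / cf_rem \<theta> n)"

definition cf_a :: "real \<Rightarrow> nat \<Rightarrow> nat" where
  "cf_a \<theta> n = nat \<lfloor>1 / cf_rem \<theta> (n - 1)\<rfloor>"

fun cf_q :: "real \<Rightarrow> nat \<Rightarrow> nat" where
  "cf_q \<theta> 0 = 1"
| "cf_q \<theta> (Suc 0) = cf_a \<theta> 1"
| "cf_q \<theta> (Suc (Suc k)) = cf_a \<theta> (Suc (Suc k)) * cf_q \<theta> (Suc k) + cf_q \<theta> k"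

definition tball :: "real \<Rightarrow> real \<Rightarrow> real set" where
  "tball x r = {y. tnorm (y - x) < r}"

definition tinterval :: "real \<Rightarrow> real \<Rightarrow> real set" where
  "tinterval l u = {y. \<exists>t. l < t \<and> t < u \<and> y - t \<in> \<int>}"

definition G_set :: "real \<Rightarrow> nat \<Rightarrow> real set" where
  "G_set \<theta> n = (\<Union>i\<in>{1..n}. tball (real i * \<theta>) (1 / real n))"

definition F_set :: "real \<Rightarrow> nat \<Rightarrow> real set" where
  "F_set \<theta> k = (\<Inter>n\<in>{cf_q \<theta> k + 1 .. cf_q \<theta> (k+1)}. G_set \<theta> n)"

end

(*
  For even k the point q_k \<theta> lies \<delta> = \<parallel>q_k \<theta>\<parallel> above an integer, and q_(k+1) \<delta> < 1:
  with D_j = q_j \<theta> - p_j = (-1)^j x_0 \<cdots> x_j (x_j the remainders), the identity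
  q_(k+1) D_k - q_k D_(k+1) = (-1)^k reads q_(k+1) |D_k| + q_k |D_(k+1)| = 1.
  Fix q_k < n \<le> q_(k+1).  Modulo 1 the orbit points with indices i, i + q_k, ..., i + M q_k \<le> n
  form a ladder i\<theta> + m\<delta> of step \<delta> < 1/n, so every point from i\<theta> - 1/n up to 1/n beyond the
  last rung is within 1/n of some j\<theta> with j \<le> n.  Since n < (M+2) q_k, the hypothesis on
  q_k \<parallel>q_k \<theta>\<parallel> is exactly what keeps the right end of the interval within 1/((M+2) q_k) of
  the last rung.
*)

theory Submission
  imports Defs
begin

lemma cf_rem_unit_irrational:
  assumes "0 < \<theta>" "\<theta> < 1" "\<theta> \<notin> \<rat>"
  shows "0 < cf_rem \<theta> n \<and> cf_rem \<theta> n < 1 \<and> cf_rem \<theta> n \<notin> \<rat>"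
proof (induction n)
  case 0
  then show ?case using assms by simp
next
  case (Suc n)
  let ?x = "1 / cf_rem \<theta> n"
  have x_irrational: "?x \<notin> \<rat>"
    using Suc Rats_divide[OF Rats_1, of ?x] by auto
  then have irrational: "frac ?x \<notin> \<rat>"
    by (metis Rats_add Rats_of_int frac_def diff_add_cancel)
  have "frac ?x \<noteq> 0"
    using x_irrational Ints_subset_Rats frac_eq_0_iff by blast
  then have "0 < frac ?x"
    using frac_ge_0[of ?x] by linarith
  then show ?case
    using irrational frac_lt_1[of ?x] by simp
qed

lemma cf_a_Suc:
  assumes "0 < \<theta>" "\<theta> < 1" "\<theta> \<notin> \<rat>"
  shows "real (cf_a \<theta> (Suc n)) = 1 / cf_rem \<theta> n - cf_rem \<theta> (Suc n)"
    and "cf_a \<theta> (Suc n) \<ge> 1"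
proof -
  let ?x = "1 / cf_rem \<theta> n"
  have "0 < cf_rem \<theta> n" "cf_rem \<theta> n < 1"
    using cf_rem_unit_irrational[OF assms] by auto
  then have floor_ge_1: "\<lfloor>?x\<rfloor> \<ge> 1"
    by (simp add: one_le_floor)
  then have "real (nat \<lfloor>?x\<rfloor>) = of_int \<lfloor>?x\<rfloor>"
    by (intro of_nat_nat) linarith
  then have a_eq: "real (cf_a \<theta> (Suc n)) = of_int \<lfloor>?x\<rfloor>"
    by (simp add: cf_a_def)
  then show "real (cf_a \<theta> (Suc n)) = ?x - cf_rem \<theta> (Suc n)"
    by (simp add: frac_def)
  show "cf_a \<theta> (Suc n) \<ge> 1"
    using floor_ge_1 by (simp add: cf_a_def del: one_le_floor)
qed

declare cf_rem.simps(2)[simp del]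

fun cf_p :: "real \<Rightarrow> nat \<Rightarrow> int" where
  "cf_p \<theta> 0 = 0"
| "cf_p \<theta> (Suc 0) = 1"
| "cf_p \<theta> (Suc (Suc k)) = int (cf_a \<theta> (Suc (Suc k))) * cf_p \<theta> (Suc k) + cf_p \<theta> k"

definition cf_dev :: "real \<Rightarrow> nat \<Rightarrow> real" where
  "cf_dev \<theta> k = real (cf_q \<theta> k) * \<theta> - of_int (cf_p \<theta> k)"

lemma cf_dev_Suc_Suc:
  "cf_dev \<theta> (Suc (Suc k)) = real (cf_a \<theta> (Suc (Suc k))) * cf_dev \<theta> (Suc k) + cf_dev \<theta> k"
  by (simp add: cf_dev_def algebra_simps)

lemma cf_dev_eq_prod:
  assumes "0 < \<theta>" "\<theta> < 1" "\<theta> \<notin> \<rat>"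
  shows "cf_dev \<theta> k = (-1)^k * (\<Prod>j\<le>k. cf_rem \<theta> j)"
proof (induction k rule: induct_nat_012)
  case 0
  then show ?case by (simp add: cf_dev_def)
next
  case 1
  have "real (cf_a \<theta> 1) * \<theta> = 1 - cf_rem \<theta> 1 * \<theta>"
    using cf_a_Suc(1)[OF assms, of 0] assms(1) by (simp add: field_simps)
  then show ?case by (simp add: cf_dev_def)
next
  case (ge2 k)
  let ?r = "cf_rem \<theta>" and ?P = "\<Prod>j\<le>k. cf_rem \<theta> j"
  have "?r (Suc k) > 0"
    using cf_rem_unit_irrational[OF assms] by auto
  moreover have "cf_dev \<theta> (Suc (Suc k)) =
      (1 / ?r (Suc k) - ?r (Suc (Suc k))) * ((-1)^Suc k * (?P * ?r (Suc k))) + (-1)^k * ?P"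
    using ge2 cf_a_Suc(1)[OF assms, of "Suc k"] by (simp add: cf_dev_Suc_Suc)
  ultimately show ?case
    by (simp add: field_simps)
qed

lemma cf_q_cross_dev:
  "real (cf_q \<theta> (Suc k)) * cf_dev \<theta> k - real (cf_q \<theta> k) * cf_dev \<theta> (Suc k) = (-1)^k"
proof (induction k)
  case 0
  then show ?case by (simp add: cf_dev_def algebra_simps)
next
  case (Suc k)
  then show ?case
    by (simp add: cf_dev_Suc_Suc algebra_simps)
qed

lemma cf_q_pos:
  assumes "0 < \<theta>" "\<theta> < 1" "\<theta> \<notin> \<rat>"
  shows "cf_q \<theta> k \<ge> 1"
  by (induction k rule: induct_nat_012) (use cf_a_Suc(2)[OF assms, of 0] in simp_all)

lemma cf_rem_prod_pos:
  assumes "0 < \<theta>" "\<theta> < 1" "\<theta> \<notin> \<rat>"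
  shows "0 < (\<Prod>j\<le>k. cf_rem \<theta> j)"
  using cf_rem_unit_irrational[OF assms] by (simp add: prod_pos)

lemma cf_rem_prod_lt_half:
  assumes "0 < \<theta>" "\<theta> < 1" "\<theta> \<notin> \<rat>" and "0 < k"
  shows "(\<Prod>j\<le>k. cf_rem \<theta> j) < 1/2"
proof -
  let ?r = "cf_rem \<theta>"
  have r: "\<And>j. 0 < ?r j \<and> ?r j < 1"
    using cf_rem_unit_irrational[OF assms(1-3)] by auto
  obtain m where k: "k = Suc m"
    using assms(4) by (cases k) auto
  have "(\<Prod>j\<le>k. ?r j) = (\<Prod>j<m. ?r j) * (?r m * ?r (Suc m))"
    unfolding k by (simp add: lessThan_Suc_atMost[symmetric] mult.assoc)
  also have "\<dots> \<le> ?r m * ?r (Suc m)"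
    using r by (intro mult_left_le_one_le prod_le_1 prod_nonneg) (auto simp: less_imp_le)
  also have "\<dots> < 1/2"
  proof -
    have "1 + ?r (Suc m) \<le> 1 / ?r m"
      using cf_a_Suc[OF assms(1-3), of m] by simp
    then have "?r m * (1 + ?r (Suc m)) \<le> 1"
      using r[of m] by (simp add: field_simps)
    moreover have "?r m * ?r (Suc m) < ?r m"
      using r[of m] r[of "Suc m"] by simp
    ultimately show ?thesis by (simp add: algebra_simps)
  qed
  finally show ?thesis .
qed

lemma tnorm_le_dist_int: "tnorm w \<le> \<bar>w - of_int m\<bar>"
  unfolding tnorm_def by (rule round_diff_minimal)

lemma tnorm_of_int_add:
  assumes "\<bar>d\<bar> < 1/2"
  shows "tnorm (of_int p + d) = \<bar>d\<bar>"
proof -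
  have "round (of_int p + d) = p"
    using assms by (intro round_unique') simp
  then show ?thesis by (simp add: tnorm_def)
qed

lemma tnorm_cf_q:
  assumes "0 < \<theta>" "\<theta> < 1" "\<theta> \<notin> \<rat>" and "0 < k"
  shows "tnorm (real (cf_q \<theta> k) * \<theta>) = (\<Prod>j\<le>k. cf_rem \<theta> j)"
proof -
  have "real (cf_q \<theta> k) * \<theta> = of_int (cf_p \<theta> k) + cf_dev \<theta> k"
    by (simp add: cf_dev_def)
  moreover have "\<bar>cf_dev \<theta> k\<bar> = (\<Prod>j\<le>k. cf_rem \<theta> j)"
    using cf_dev_eq_prod[OF assms(1-3)] cf_rem_prod_pos[OF assms(1-3)] by (simp add: abs_mult abs_of_pos)
  ultimately show ?thesis
    using tnorm_of_int_add cf_rem_prod_lt_half[OF assms] by simp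
qed

lemma cf_q_Suc_mult_tnorm_lt_1:
  assumes "0 < \<theta>" "\<theta> < 1" "\<theta> \<notin> \<rat>" and "0 < k"
  shows "real (cf_q \<theta> (Suc k)) * tnorm (real (cf_q \<theta> k) * \<theta>) < 1"
proof -
  let ?P = "\<lambda>k. \<Prod>j\<le>k. cf_rem \<theta> j"
  have "(-1)^k * (real (cf_q \<theta> (Suc k)) * ?P k + real (cf_q \<theta> k) * ?P (Suc k)) = (-1)^k"
    using cf_q_cross_dev[of \<theta> k] by (simp add: cf_dev_eq_prod[OF assms(1-3)] algebra_simps)
  then have "real (cf_q \<theta> (Suc k)) * ?P k + real (cf_q \<theta> k) * ?P (Suc k) = 1"
    by simp
  moreover have "0 < real (cf_q \<theta> k) * ?P (Suc k)"
    using cf_q_pos[OF assms(1-3), of k] by (intro mult_pos_pos cf_rem_prod_pos[OF assms(1-3)]) simp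
  ultimately show ?thesis
    using tnorm_cf_q[OF assms] by simp
qed

lemma cf_q_mult_even:
  assumes "0 < \<theta>" "\<theta> < 1" "\<theta> \<notin> \<rat>" and "0 < k" "even k"
  shows "real (cf_q \<theta> k) * \<theta> = of_int (cf_p \<theta> k) + tnorm (real (cf_q \<theta> k) * \<theta>)"
  using cf_dev_eq_prod[OF assms(1-3), of k] tnorm_cf_q[OF assms(1-4)] assms(5)
  by (simp add: cf_dev_def)

lemma gap_bound_few_steps:
  fixes b M :: nat and c :: real
  assumes "M < b" "c < 1 / (real b * real (b+1))"
  shows "(real b - 1 - real M) * c + 1 / real (b+1) \<le> 1 / real (M+2)"
proof -
  define s where "s = b - M - 1"
  have s: "real b = real s + real M + 1"
    using assms(1) by (simp add: s_def)
  have "real s \<le> real s * real s"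
    by (cases s) auto
  then have ineq: "real s / ((real s + real M + 1) * (real s + real M + 2)) + 1 / (real s + real M + 2)
      \<le> 1 / (real M + 2)"
    by (simp add: divide_simps) (simp add: algebra_simps)
  have "real s * c \<le> real s * (1 / (real b * real (b+1)))"
    using assms(2) by (intro mult_left_mono) auto
  also have "\<dots> = real s / ((real s + real M + 1) * (real s + real M + 2))"
    using s by simp
  finally have "real s * c \<le> real s / ((real s + real M + 1) * (real s + real M + 2))" .
  moreover have eqs: "(real b - 1 - real M) * c = real s * c" "real (b+1) = real s + real M + 2"
      "real (M+2) = real M + 2"
    using s by simp_all
  ultimately show ?thesis
    unfolding eqs using ineq by linarith
qed

lemma gap_bound_many_steps:
  fixes b M :: nat and c :: real
  assumes "b \<le> M" "1 / (real (b+1) * real (b+2)) \<le> c"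
  shows "(real b - 1 - real M) * c + 1 / real (b+1) \<le> 1 / real (M+2)"
proof -
  define r where "r = M + 1 - b"
  have r: "1 \<le> r" "real M = real b + real r - 1"
    using assms(1) by (simp_all add: r_def)
  have "real r \<le> real r * real r"
    by (cases r) auto
  then have ineq: "1 / (real b + 1) - real r / ((real b + 1) * (real b + 2)) \<le> 1 / (real b + real r + 1)"
    using r by (simp add: divide_simps) (simp add: algebra_simps)
  have "real r / ((real b + 1) * (real b + 2)) \<le> real r * c"
    using mult_left_mono[OF assms(2), of "real r"] by (simp add: add_ac)
  moreover have eqs: "(real b - 1 - real M) * c = - (real r * c)" "real (b+1) = real b + 1"
      "real (M+2) = real b + real r + 1"
    using r by simp_all
  ultimately show ?thesis
    unfolding eqs using ineq by linarith
qed

lemma gap_bound: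
  fixes b M :: nat and c :: real
  assumes "1 / (real (b+1) * real (b+2)) \<le> c" "c < 1 / (real b * real (b+1))"
  shows "(real b - 1 - real M) * c + 1 / real (b+1) \<le> 1 / real (M+2)"
  using gap_bound_few_steps[OF _ assms(2)] gap_bound_many_steps[OF _ assms(1)] by (cases "M < b") auto

lemma last_rung_close:
  fixes q n b M :: nat and \<delta> t :: real
  assumes "1 / (real (b+1) * real (b+2)) \<le> real q * \<delta>" "real q * \<delta> < 1 / (real b * real (b+1))"
    and "0 < q" "0 < n" "n < (M+2) * q"
    and "t < (real b - 1) * \<delta> + 1 / (real (b+1) * real q)"
  shows "t - real M * \<delta> < 1 / real n"
proof -
  have "t - real M * \<delta> < (real b - 1 - real M) * \<delta> + 1 / (real (b+1) * real q)"
    using assms(6) by (simp add: algebra_simps)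
  also have "\<dots> = ((real b - 1 - real M) * (real q * \<delta>) + 1 / real (b+1)) / real q"
    using assms(3) by (simp add: add_divide_distrib divide_divide_eq_left mult.commute)
  also have "\<dots> \<le> 1 / real (M+2) / real q"
    by (rule divide_right_mono[OF gap_bound[OF assms(1,2)]]) simp
  also have "\<dots> < 1 / real n"
  proof -
    have "real n < real (M+2) * real q"
      by (metis assms(5) of_nat_less_iff of_nat_mult)
    then show ?thesis
      using assms(4) by (simp add: frac_less2)
  qed
  finally show ?thesis .
qed

lemma ex_nat_mult_le_less:
  fixes \<delta> t :: real
  assumes "0 < \<delta>" "0 \<le> t"
  obtains f :: nat where "real f * \<delta> \<le> t" "t < (real f + 1) * \<delta>"
proof
  have "0 \<le> t / \<delta>"
    using assms by simp
  then have f: "real (nat \<lfloor>t / \<delta>\<rfloor>) = of_int \<lfloor>t / \<delta>\<rfloor>"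
    by simp
  show "real (nat \<lfloor>t / \<delta>\<rfloor>) * \<delta> \<le> t"
    using assms(1) by (simp add: f pos_le_divide_eq[symmetric])
  show "t < (real (nat \<lfloor>t / \<delta>\<rfloor>) + 1) * \<delta>"
    using assms(1) by (simp add: f pos_divide_less_eq[symmetric])
qed

lemma ladder_point_close:
  fixes q n i b :: nat and \<delta> t :: real
  assumes "1 \<le> i" "i \<le> q" "q < n" "0 < \<delta>" "real n * \<delta> < 1"
    and "1 / (real (b+1) * real (b+2)) \<le> real q * \<delta>" "real q * \<delta> < 1 / (real b * real (b+1))"
    and "- (1 / real n) < t" "t < (real b - 1) * \<delta> + 1 / (real (b+1) * real q)"
  shows "\<exists>m. i + m * q \<le> n \<and> \<bar>t - real m * \<delta>\<bar> < 1 / real n"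
proof (cases "t \<le> 0")
  case True
  then show ?thesis
    using assms(2,3,8) by (intro exI[of _ 0]) simp
next
  case False
  define M where "M = (n - i) div q"
  have "M * q \<le> n - i" "n - i < (M + 1) * q"
    using assms(1-3) by (simp_all add: M_def div_times_less_eq_dividend dividend_less_div_times)
  then have M: "i + M * q \<le> n" "n < (M + 2) * q"
    using assms(2,3) by simp_all
  have step_lt: "\<delta> < 1 / real n"
    using assms(3,5) by (simp add: field_simps)
  obtain f :: nat where f: "real f * \<delta> \<le> t" "t < (real f + 1) * \<delta>"
    using ex_nat_mult_le_less[OF assms(4)] False by (metis linear)
  show ?thesis
  proof (cases "f \<le> M")
    case True
    then have "i + f * q \<le> n"
      using M(1) by (meson add_le_mono1 le_trans mult_le_mono1 nat_add_left_cancel_le)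
    moreover have "\<bar>t - real f * \<delta>\<bar> < 1 / real n"
      using f step_lt by (simp add: algebra_simps)
    ultimately show ?thesis by blast
  next
    case False
    then have "(real M + 1) * \<delta> \<le> real f * \<delta>"
      using assms(4) by (intro mult_right_mono) simp_all
    then have "real M * \<delta> < t"
      using f assms(4) by (simp add: algebra_simps)
    moreover have "t - real M * \<delta> < 1 / real n"
      using assms(1-3) M(2) by (intro last_rung_close[OF assms(6,7) _ _ _ assms(9)]) simp_all
    ultimately show ?thesis
      using M(1) by (intro exI[of _ M]) simp
  qed
qed

lemma tinterval_mono:
  assumes "l' \<le> l" "u \<le> u'"
  shows "tinterval l u \<subseteq> tinterval l' u'"
  unfolding tinterval_def using assms by (auto intro: le_less_trans less_le_trans)

lemma ladder_tinterval_subset_G_set: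
  fixes \<theta> \<delta> :: real and q n i b :: nat and p :: int
  assumes "real q * \<theta> = of_int p + \<delta>" "0 < \<delta>" "real n * \<delta> < 1"
    and "1 \<le> i" "i \<le> q" "q < n"
    and "1 / (real (b+1) * real (b+2)) \<le> real q * \<delta>" "real q * \<delta> < 1 / (real b * real (b+1))"
  shows "tinterval (real i * \<theta> - 1 / real n) (real i * \<theta> + (real b - 1) * \<delta> + 1 / (real (b+1) * real q))
    \<subseteq> G_set \<theta> n"
proof
  fix y
  assume "y \<in> tinterval (real i * \<theta> - 1 / real n) (real i * \<theta> + (real b - 1) * \<delta> + 1 / (real (b+1) * real q))"
  then obtain t z where y: "y = real i * \<theta> + t + of_int z"
    and t: "- (1 / real n) < t" "t < (real b - 1) * \<delta> + 1 / (real (b+1) * real q)"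
    unfolding tinterval_def
    by (auto elim!: Ints_cases intro: that[of "_ - real i * \<theta>"] simp: algebra_simps)
  obtain m where m: "i + m * q \<le> n" "\<bar>t - real m * \<delta>\<bar> < 1 / real n"
    using ladder_point_close[OF assms(4-6,2,3,7,8) t] by blast
  have "y - real (i + m * q) * \<theta> = t + of_int z - real m * (real q * \<theta>)"
    using y by (simp add: algebra_simps)
  also have "\<dots> = t - real m * \<delta> + of_int (z - int m * p)"
    unfolding assms(1) by (simp add: algebra_simps)
  finally have "tnorm (y - real (i + m * q) * \<theta>) \<le> \<bar>t - real m * \<delta>\<bar>"
    using tnorm_le_dist_int[of _ "z - int m * p"] by (metis add_diff_cancel_right')
  then have "tnorm (y - real (i + m * q) * \<theta>) < 1 / real n"
    using m(2) by linarith
  then show "y \<in> G_set \<theta> n"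
    unfolding G_set_def tball_def using assms(4) m(1) by (intro UN_I[of "i + m * q"]) auto
qed

theorem lemma4p1:
  fixes \<theta> :: real and k b :: nat
  assumes "0 < \<theta>" "\<theta> < 1" "\<theta> \<notin> \<rat>"
    and "k \<ge> 1" "even k" "b \<ge> 1"
    and "1 / (real (b+1) * real (b+2)) \<le> real (cf_q \<theta> k) * tnorm (real (cf_q \<theta> k) * \<theta>)"
    and "real (cf_q \<theta> k) * tnorm (real (cf_q \<theta> k) * \<theta>) < 1 / (real b * real (b+1))"
  shows "(\<Union>i\<in>{1..cf_q \<theta> k}.
           tinterval (real i * \<theta> - 1 / real (cf_q \<theta> (k+1)))
                     (real i * \<theta> + (real b - 1) * tnorm (real (cf_q \<theta> k) * \<theta>)
                        + 1 / (real (b+1) * real (cf_q \<theta> k))))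
         \<subseteq> F_set \<theta> k"
proof -
  define q Q \<delta> where "q = cf_q \<theta> k" and "Q = cf_q \<theta> (k+1)" and "\<delta> = tnorm (real q * \<theta>)"
  have k: "0 < k"
    using assms(4) by simp
  have q_theta: "real q * \<theta> = of_int (cf_p \<theta> k) + \<delta>"
    unfolding q_def \<delta>_def by (rule cf_q_mult_even[OF assms(1-3) k assms(5)])
  have \<delta>_pos: "0 < \<delta>"
    unfolding \<delta>_def q_def using tnorm_cf_q[OF assms(1-3) k] cf_rem_prod_pos[OF assms(1-3)] by simp
  have Q_\<delta>: "real Q * \<delta> < 1"
    unfolding Q_def \<delta>_def q_def using cf_q_Suc_mult_tnorm_lt_1[OF assms(1-3) k] by simp
  have "tinterval (real i * \<theta> - 1 / real Q) (real i * \<theta> + (real b - 1) * \<delta> + 1 / (real (b+1) * real q))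
      \<subseteq> G_set \<theta> n" if i: "i \<in> {1..q}" and n: "n \<in> {q+1..Q}" for i n
  proof -
    have "real n * \<delta> \<le> real Q * \<delta>"
      using n \<delta>_pos by (intro mult_right_mono) auto
    then have n_\<delta>: "real n * \<delta> < 1"
      using Q_\<delta> by linarith
    have "1 / real Q \<le> 1 / real n"
      using n by (simp add: frac_le)
    then have "tinterval (real i * \<theta> - 1 / real Q) (real i * \<theta> + (real b - 1) * \<delta> + 1 / (real (b+1) * real q))
        \<subseteq> tinterval (real i * \<theta> - 1 / real n) (real i * \<theta> + (real b - 1) * \<delta> + 1 / (real (b+1) * real q))"
      by (intro tinterval_mono) simp_all
    also have "\<dots> \<subseteq> G_set \<theta> n"
      using ladder_tinterval_subset_G_set[OF q_theta \<delta>_pos n_\<delta> _ _ _ assms(7,8)[folded q_def, folded \<delta>_def]]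
        i n by simp
    finally show ?thesis .
  qed
  then show ?thesis
    unfolding F_set_def q_def Q_def \<delta>_def by blast
qed

end
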